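(* $N^1(BA_2^+)=\Omega(n)$.
   Context: $BA_2^+$ is the syntactic ordered monoid of the language $(ab)^*\subseteq\{a,b\}^*$. Syntactic ordered monoid: for $L\subseteq\Sigma^*$ write $x\preceq_L y$ if for all $u,v\in\Sigma^*$, $uyv\in L\Rightarrow uxv\in L$, and $x\equiv_L y$ if both $x\preceq_L y$ and $y\preceq_L x$; the syntactic monoid is $\Sigma^*/\equiv_L$ ordered by $[x]\le_L[y]$ iff $x\preceq_L y$. Non-deterministic communication complexity: for $f:X\times Y\to\{0,1\}$, $N^1(f)$ is the minimum cost of a non-deterministic protocol for $f$; equivalently, up to an additive constant 2, $N^1(f)=\log_2 C^1(f)$, where $C^1(f)$ is the minimum number of rectangles $S\times T$ on which $f\equiv1$ whose union is $f^{-1}(1)$. An order ideal of an ordered monoid $M$ is a subset $I$ with $y\in I, x\le y\Rightarrow x\in I$. For an order ideal $I$, $N^1(M,I)(n)$ is $N^1$ of the function where Alice receives $m_1,m_3,\dots,m_{2n-1}\in M$, Bob receives $m_2,\dots,m_{2n}\in M$, with value $1$ iff $m_1\cdots m_{2n}\in I$; $N^1(M)(n)=\max_I N^1(M,I)(n)$. Asymptotics are as $n\to\infty$. *)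

theory Defs
  imports Complex_Main "HOL-Library.Landau_Symbols"
begin

definition syn_le :: "'a list set \<Rightarrow> 'a list \<Rightarrow> 'a list \<Rightarrow> bool" where
  "syn_le L x y \<longleftrightarrow> (\<forall>u v. u @ y @ v \<in> L \<longrightarrow> u @ x @ v \<in> L)"

definition syn_eq :: "'a list set \<Rightarrow> 'a list \<Rightarrow> 'a list \<Rightarrow> bool" where
  "syn_eq L x y \<longleftrightarrow> syn_le L x y \<and> syn_le L y x"

definition syn_class :: "'a list set \<Rightarrow> 'a list \<Rightarrow> 'a list set" where
  "syn_class L x = {y. syn_eq L x y}"

definition syn_carrier :: "'a list set \<Rightarrow> 'a list set set" where
  "syn_carrier L = range (syn_class L)"

definition syn_mult :: "'a list set \<Rightarrow> 'a list set \<Rightarrow> 'a list set \<Rightarrow> 'a list set" where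
  "syn_mult L c d = syn_class L ((SOME x. x \<in> c) @ (SOME y. y \<in> d))"

definition syn_one :: "'a list set \<Rightarrow> 'a list set" where
  "syn_one L = syn_class L []"

definition syn_leq :: "'a list set \<Rightarrow> 'a list set \<Rightarrow> 'a list set \<Rightarrow> bool" where
  "syn_leq L c d \<longleftrightarrow> syn_le L (SOME x. x \<in> c) (SOME y. y \<in> d)"

definition syn_prod :: "'a list set \<Rightarrow> 'a list set list \<Rightarrow> 'a list set" where
  "syn_prod L cs = foldr (syn_mult L) cs (syn_one L)"

definition order_ideal :: "'a list set \<Rightarrow> 'a list set set \<Rightarrow> bool" where
  "order_ideal L I \<longleftrightarrow> I \<subseteq> syn_carrier L \<and>
     (\<forall>c\<in>syn_carrier L. \<forall>d\<in>I. syn_leq L c d \<longrightarrow> c \<in> I)"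

definition C1 :: "'x set \<Rightarrow> 'y set \<Rightarrow> ('x \<Rightarrow> 'y \<Rightarrow> bool) \<Rightarrow> nat" where
  "C1 X Y f = (LEAST k. \<exists>R. finite R \<and> card R = k \<and>
      (\<forall>(S,T)\<in>R. S \<subseteq> X \<and> T \<subseteq> Y \<and> (\<forall>x\<in>S. \<forall>y\<in>T. f x y)) \<and>
      {(x,y). x \<in> X \<and> y \<in> Y \<and> f x y} = (\<Union>(S,T)\<in>R. S \<times> T))"

definition N1 :: "'x set \<Rightarrow> 'y set \<Rightarrow> ('x \<Rightarrow> 'y \<Rightarrow> bool) \<Rightarrow> real" where
  "N1 X Y f = log 2 (real (C1 X Y f))"

text \<open>Alice holds m1,m3,...,m_{2n-1}, Bob holds m2,...,m_{2n}.\<close>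
definition interleave :: "'b list \<Rightarrow> 'b list \<Rightarrow> 'b list" where
  "interleave xs ys = concat (map (\<lambda>(x,y). [x,y]) (zip xs ys))"

definition inputs :: "'a list set \<Rightarrow> nat \<Rightarrow> 'a list set list set" where
  "inputs L n = {xs. length xs = n \<and> set xs \<subseteq> syn_carrier L}"

definition N1_ideal :: "'a list set \<Rightarrow> 'a list set set \<Rightarrow> nat \<Rightarrow> real" where
  "N1_ideal L I n = N1 (inputs L n) (inputs L n)
      (\<lambda>xs ys. syn_prod L (interleave xs ys) \<in> I)"

definition N1_monoid :: "'a list set \<Rightarrow> nat \<Rightarrow> real" where
  "N1_monoid L n = Max {N1_ideal L I n | I. order_ideal L I}"

datatype letter = A | B

definition L_ab :: "letter list set" where
  "L_ab = {concat (replicate k [A, B]) | k. True}"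

end

theory Submission
  imports Defs
begin

text \<open>
  Take the order ideal of those elements of the syntactic monoid that lie in \<open>(ab)\<^sup>*\<close>.
  For \<open>s, t \<in> {0,1}\<^sup>n\<close> let Alice hold the classes of \<open>ab\<close> (bit 1) or \<open>a\<close> (bit 0) and Bob
  those of \<open>\<epsilon>\<close> (bit 1) or \<open>b\<close> (bit 0); the interleaved product then lies in \<open>(ab)\<^sup>*\<close>
  iff \<open>s = t\<close>. These \<open>2\<^sup>n\<close> input pairs form a fooling set, so every cover of the 1-entries
  by 1-rectangles needs at least \<open>2\<^sup>n\<close> rectangles, i.e. \<open>N\<^sup>1 \<ge> n\<close>.
\<close>

lemma syn_eq_refl: "syn_eq L x x"
  by (simp add: syn_eq_def syn_le_def)

lemma syn_eq_sym: "syn_eq L x y \<Longrightarrow> syn_eq L y x"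
  by (simp add: syn_eq_def)

lemma syn_eq_trans: "syn_eq L x y \<Longrightarrow> syn_eq L y z \<Longrightarrow> syn_eq L x z"
  unfolding syn_eq_def syn_le_def by blast

lemma syn_class_eqI: "syn_eq L x y \<Longrightarrow> syn_class L x = syn_class L y"
  unfolding syn_class_def using syn_eq_sym syn_eq_trans by blast

lemma syn_class_self: "x \<in> syn_class L x"
  by (simp add: syn_class_def syn_eq_refl)

lemma syn_eq_some_syn_class: "syn_eq L x (SOME z. z \<in> syn_class L x)"
  using someI[of "\<lambda>z. z \<in> syn_class L x", OF syn_class_self] by (simp add: syn_class_def)

lemma syn_le_mem: "syn_le L x y \<Longrightarrow> y \<in> L \<Longrightarrow> x \<in> L"
  unfolding syn_le_def by (metis append_Nil append_Nil2)

lemma syn_eq_mem_iff: "syn_eq L x y \<Longrightarrow> x \<in> L \<longleftrightarrow> y \<in> L"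
  unfolding syn_eq_def using syn_le_mem by blast

lemma syn_eq_append: "syn_eq L x x' \<Longrightarrow> syn_eq L y y' \<Longrightarrow> syn_eq L (x @ y) (x' @ y')"
  unfolding syn_eq_def syn_le_def by (metis append.assoc)

lemma syn_mult_syn_class: "syn_mult L (syn_class L x) (syn_class L y) = syn_class L (x @ y)"
  unfolding syn_mult_def
  by (rule syn_class_eqI, rule syn_eq_sym, rule syn_eq_append) (rule syn_eq_some_syn_class)+

lemma syn_prod_map_syn_class: "syn_prod L (map (syn_class L) ws) = syn_class L (concat ws)"
  by (induction ws) (simp_all add: syn_prod_def syn_one_def syn_mult_syn_class)

definition accepted_ideal :: "'a list set \<Rightarrow> 'a list set set" where
  "accepted_ideal L = {c \<in> syn_carrier L. \<exists>w\<in>c. w \<in> L}"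

lemma syn_class_in_accepted_ideal_iff: "syn_class L w \<in> accepted_ideal L \<longleftrightarrow> w \<in> L"
proof
  assume "syn_class L w \<in> accepted_ideal L"
  then obtain w' where "syn_eq L w w'" "w' \<in> L"
    by (auto simp: accepted_ideal_def syn_class_def)
  thus "w \<in> L"
    using syn_eq_mem_iff by blast
qed (auto simp: accepted_ideal_def syn_carrier_def intro: syn_class_self)

lemma order_ideal_accepted_ideal: "order_ideal L (accepted_ideal L)"
  unfolding order_ideal_def
proof (intro conjI ballI impI)
  show "accepted_ideal L \<subseteq> syn_carrier L"
    by (auto simp: accepted_ideal_def)
next
  fix c d
  assume c: "c \<in> syn_carrier L" and d: "d \<in> accepted_ideal L" and "syn_leq L c d"
  obtain x y where cx: "c = syn_class L x" and dy: "d = syn_class L y"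
    using c d by (auto simp: accepted_ideal_def syn_carrier_def)
  have "y \<in> L"
    using d dy syn_class_in_accepted_ideal_iff by blast
  hence "(SOME z. z \<in> d) \<in> L"
    unfolding dy using syn_eq_mem_iff[OF syn_eq_some_syn_class] by blast
  hence "(SOME z. z \<in> c) \<in> L"
    using \<open>syn_leq L c d\<close> syn_le_mem by (auto simp: syn_leq_def)
  hence "x \<in> L"
    unfolding cx using syn_eq_mem_iff[OF syn_eq_some_syn_class] by blast
  thus "c \<in> accepted_ideal L"
    using cx syn_class_in_accepted_ideal_iff by blast
qed

lemma finite_syn_carrier_if_factors:
  assumes "finite (range \<kappa>)" and "\<And>x y. \<kappa> x = \<kappa> y \<Longrightarrow> syn_eq L x y"
  shows "finite (syn_carrier L)"
proof -
  define rep where "rep p = syn_class L (SOME x. \<kappa> x = p)" for p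
  have "syn_class L x = rep (\<kappa> x)" for x
  proof -
    have "\<kappa> (SOME x'. \<kappa> x' = \<kappa> x) = \<kappa> x"
      by (rule someI) (rule refl)
    thus ?thesis
      unfolding rep_def by (intro syn_class_eqI assms(2)) simp
  qed
  hence "syn_carrier L = range (\<lambda>x. rep (\<kappa> x))"
    by (simp add: syn_carrier_def)
  thus ?thesis
    using finite_range_imageI[OF assms(1)] by simp
qed

text \<open>
  The \<open>LEAST\<close> in \<open>C1\<close> is attained: the singleton rectangles of the 1-entries
  form a finite cover when \<open>X\<close> and \<open>Y\<close> are finite.
\<close>
lemma C1_cover_exists:
  assumes "finite X" and "finite Y"
  obtains R where "finite R" "card R = C1 X Y f"
    "\<forall>(S,T)\<in>R. S \<subseteq> X \<and> T \<subseteq> Y \<and> (\<forall>x\<in>S. \<forall>y\<in>T. f x y)"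
    "{(x,y). x \<in> X \<and> y \<in> Y \<and> f x y} = (\<Union>(S,T)\<in>R. S \<times> T)"
proof -
  let ?Z = "{(x,y). x \<in> X \<and> y \<in> Y \<and> f x y}"
  let ?P = "\<lambda>k. \<exists>R. finite R \<and> card R = k \<and>
      (\<forall>(S,T)\<in>R. S \<subseteq> X \<and> T \<subseteq> Y \<and> (\<forall>x\<in>S. \<forall>y\<in>T. f x y)) \<and>
      ?Z = (\<Union>(S,T)\<in>R. S \<times> T)"
  let ?R = "(\<lambda>(x,y). ({x}, {y})) ` ?Z"
  have "finite ?Z"
    by (rule finite_subset[OF _ finite_cartesian_product[OF assms]]) blast
  moreover have "\<forall>(S,T)\<in>?R. S \<subseteq> X \<and> T \<subseteq> Y \<and> (\<forall>x\<in>S. \<forall>y\<in>T. f x y)"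
    by auto
  moreover have "?Z = (\<Union>(S,T)\<in>?R. S \<times> T)"
    by auto
  ultimately have "?P (card ?R)"
    by blast
  hence "?P (C1 X Y f)"
    unfolding C1_def by (rule LeastI)
  thus ?thesis
    using that by blast
qed

text \<open>
  Fooling set bound: distinct elements of \<open>F\<close> cannot share a 1-rectangle, since it would
  also contain the two crossed pairs.
\<close>
lemma card_fooling_set_le_C1:
  assumes "finite X" and "finite Y"
    and ones: "\<And>s. s \<in> F \<Longrightarrow> a s \<in> X \<and> b s \<in> Y \<and> f (a s) (b s)"
    and fool: "\<And>s t. s \<in> F \<Longrightarrow> t \<in> F \<Longrightarrow> f (a s) (b t) \<Longrightarrow> f (a t) (b s) \<Longrightarrow> s = t"
  shows "card F \<le> C1 X Y f"
proof -
  obtain R where R: "finite R" "card R = C1 X Y f"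
      "\<forall>(S,T)\<in>R. S \<subseteq> X \<and> T \<subseteq> Y \<and> (\<forall>x\<in>S. \<forall>y\<in>T. f x y)"
      "{(x,y). x \<in> X \<and> y \<in> Y \<and> f x y} = (\<Union>(S,T)\<in>R. S \<times> T)"
    using C1_cover_exists[OF assms(1,2)] .
  have "\<exists>r\<in>R. (a s, b s) \<in> fst r \<times> snd r" if "s \<in> F" for s
  proof -
    have "(a s, b s) \<in> (\<Union>(S,T)\<in>R. S \<times> T)"
      using ones[OF that] R(4) by blast
    thus ?thesis
      by force
  qed
  then obtain r where r: "\<And>s. s \<in> F \<Longrightarrow> r s \<in> R \<and> (a s, b s) \<in> fst (r s) \<times> snd (r s)"
    by metis
  have "inj_on r F"
  proof (rule inj_onI)
    fix s t assume "s \<in> F" "t \<in> F" "r s = r t"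
    have "\<forall>x\<in>fst (r s). \<forall>y\<in>snd (r s). f x y"
      using r[OF \<open>s \<in> F\<close>] R(3) by auto
    moreover have "a s \<in> fst (r s)" "b t \<in> snd (r s)" "a t \<in> fst (r s)" "b s \<in> snd (r s)"
      using r[OF \<open>s \<in> F\<close>] r[OF \<open>t \<in> F\<close>] \<open>r s = r t\<close> by auto
    ultimately show "s = t"
      using fool[OF \<open>s \<in> F\<close> \<open>t \<in> F\<close>] by blast
  qed
  moreover have "r ` F \<subseteq> R"
    using r by auto
  ultimately show ?thesis
    using card_inj_on_le[OF _ _ R(1)] R(2) by simp
qed

lemma interleave_Cons [simp]: "interleave (x # xs) (y # ys) = x # y # interleave xs ys"
  by (simp add: interleave_def)

lemma interleave_Nil1 [simp]: "interleave [] ys = []"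
  by (simp add: interleave_def)

lemma interleave_Nil2 [simp]: "interleave xs [] = []"
  by (simp add: interleave_def)

lemma interleave_map: "interleave (map f xs) (map f ys) = map f (interleave xs ys)"
  by (induction xs ys rule: list_induct2') simp_all

text \<open>
  The minimal automaton of \<open>(ab)\<^sup>*\<close>: state 0 is initial and accepting, 1 expects \<open>b\<close>,
  and 2 is the sink.
\<close>
definition ab_step :: "nat \<Rightarrow> letter \<Rightarrow> nat" where
  "ab_step q c = (if q = 0 \<and> c = A then 1 else if q = 1 \<and> c = B then 0 else 2)"

definition ab_run :: "nat \<Rightarrow> letter list \<Rightarrow> nat" where
  "ab_run q w = foldl ab_step q w"

lemma ab_run_Nil [simp]: "ab_run q [] = q"
  by (simp add: ab_run_def)

lemma ab_run_Cons [simp]: "ab_run q (c # w) = ab_run (ab_step q c) w"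
  by (simp add: ab_run_def)

lemma ab_run_append [simp]: "ab_run q (x @ y) = ab_run (ab_run q x) y"
  by (simp add: ab_run_def)

lemma ab_run_sink: "ab_run 2 w = 2"
  by (induction w) (simp_all add: ab_step_def)

lemma ab_run_le_2: "q \<le> 2 \<Longrightarrow> ab_run q w \<le> 2"
  by (induction w arbitrary: q) (simp_all add: ab_step_def)

lemma ab_run_0_states:
  "(ab_run 0 w = 0 \<longrightarrow> (\<exists>k. w = concat (replicate k [A, B]))) \<and>
   (ab_run 0 w = 1 \<longrightarrow> (\<exists>k. w = concat (replicate k [A, B]) @ [A]))"
proof (induction w rule: rev_induct)
  case Nil
  show ?case
    by (auto intro: exI[of _ 0])
next
  case (snoc c w)
  have rep_Suc: "concat (replicate k [A, B]) @ [A, B] = concat (replicate (Suc k) [A, B])" for k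
    by (induction k) simp_all
  show ?case
  proof (intro conjI impI)
    assume "ab_run 0 (w @ [c]) = 0"
    hence "ab_run 0 w = 1" "c = B"
      by (auto simp: ab_step_def split: if_splits)
    thus "\<exists>k. w @ [c] = concat (replicate k [A, B])"
      using snoc rep_Suc by (metis append.assoc append_Cons append_Nil)
  next
    assume "ab_run 0 (w @ [c]) = 1"
    hence "ab_run 0 w = 0" "c = A"
      by (auto simp: ab_step_def split: if_splits)
    thus "\<exists>k. w @ [c] = concat (replicate k [A, B]) @ [A]"
      using snoc by auto
  qed
qed

lemma L_ab_iff_ab_run: "w \<in> L_ab \<longleftrightarrow> ab_run 0 w = 0"
proof -
  have "ab_run 0 (concat (replicate k [A, B])) = 0" for k
    by (induction k) (simp_all add: ab_step_def)
  thus ?thesis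
    using ab_run_0_states[of w] by (auto simp: L_ab_def)
qed

text \<open>
  From the sink nothing changes, so a word's action on the automaton is determined by its
  effect on the states 0 and 1.
\<close>
lemma syn_eq_L_ab_if_ab_run_eq:
  assumes "ab_run 0 x = ab_run 0 y" and "ab_run 1 x = ab_run 1 y"
  shows "syn_eq L_ab x y"
proof -
  have "u @ x @ v \<in> L_ab \<longleftrightarrow> u @ y @ v \<in> L_ab" for u v
  proof -
    have "ab_run 0 u \<in> {0, 1, 2}"
      using ab_run_le_2[of 0 u] by auto
    hence "ab_run (ab_run 0 u) x = ab_run (ab_run 0 u) y"
      using assms by (auto simp only: insert_iff empty_iff ab_run_sink)
    thus ?thesis
      by (simp add: L_ab_iff_ab_run)
  qed
  thus ?thesis
    by (simp add: syn_eq_def syn_le_def)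
qed

lemma finite_syn_carrier_L_ab: "finite (syn_carrier L_ab)"
proof (rule finite_syn_carrier_if_factors)
  show "finite (range (\<lambda>x. (ab_run 0 x, ab_run 1 x)))"
    by (rule finite_subset[of _ "{..2} \<times> {..2}"]) (auto intro: ab_run_le_2)
qed (simp add: syn_eq_L_ab_if_ab_run_eq)

definition alice_word :: "bool \<Rightarrow> letter list" where
  "alice_word b = (if b then [A, B] else [A])"

definition bob_word :: "bool \<Rightarrow> letter list" where
  "bob_word b = (if b then [] else [B])"

definition fooling_word :: "bool list \<Rightarrow> bool list \<Rightarrow> letter list" where
  "fooling_word s t = concat (interleave (map alice_word s) (map bob_word t))"

lemma fooling_word_Cons:
  "fooling_word (b # s) (c # t) = alice_word b @ bob_word c @ fooling_word s t"
  by (simp add: fooling_word_def)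

lemma ab_run_1_fooling_word: "ab_run 1 (fooling_word s t) \<noteq> 0"
  by (cases s; cases t) (simp_all add: fooling_word_def alice_word_def ab_step_def ab_run_sink)

lemma ab_run_fooling_word_diag: "ab_run 0 (fooling_word s s) = 0"
  by (induction s) (simp_all add: fooling_word_def alice_word_def bob_word_def ab_step_def)

text \<open>
  A mismatched block sends the automaton to state 1 (\<open>a\<close>) or to the sink (\<open>abb\<close>), and
  from neither can it return to 0.
\<close>
lemma ab_run_fooling_word_eq_0_imp_eq:
  "length s = length t \<Longrightarrow> ab_run 0 (fooling_word s t) = 0 \<Longrightarrow> s = t"
proof (induction s t rule: list_induct2)
  case (Cons b s c t)
  show ?case
  proof (cases "b = c")
    case True
    hence "ab_run 0 (alice_word b @ bob_word c) = 0"
      by (cases c) (simp_all add: alice_word_def bob_word_def ab_step_def)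
    thus ?thesis
      using Cons True by (simp add: fooling_word_Cons)
  next
    case False
    hence "ab_run 0 (alice_word b @ bob_word c) \<in> {1, 2}"
      by (cases b; cases c) (auto simp: alice_word_def bob_word_def ab_step_def)
    hence "ab_run 0 (fooling_word (b # s) (c # t)) \<noteq> 0"
      using ab_run_1_fooling_word[of s t] ab_run_sink[of "fooling_word s t"]
      by (auto simp: fooling_word_Cons)
    thus ?thesis
      using Cons.prems by contradiction
  qed
qed simp

lemma finite_inputs: "finite (syn_carrier L) \<Longrightarrow> finite (inputs L n)"
  using finite_lists_length_eq[of "syn_carrier L" n] by (simp add: inputs_def conj_commute)

lemma N1_ideal_accepted_ideal_ge: "real n \<le> N1_ideal L_ab (accepted_ideal L_ab) n"
proof -
  let ?F = "{s :: bool list. length s = n}"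
  let ?a = "\<lambda>s. map (syn_class L_ab) (map alice_word s)"
  let ?b = "\<lambda>s. map (syn_class L_ab) (map bob_word s)"
  let ?f = "\<lambda>xs ys. syn_prod L_ab (interleave xs ys) \<in> accepted_ideal L_ab"
  let ?C = "C1 (inputs L_ab n) (inputs L_ab n) ?f"
  have f_iff: "?f (?a s) (?b t) \<longleftrightarrow> ab_run 0 (fooling_word s t) = 0" for s t
    by (simp only: interleave_map syn_prod_map_syn_class syn_class_in_accepted_ideal_iff
        fooling_word_def L_ab_iff_ab_run)
  have "card ?F \<le> ?C"
  proof (rule card_fooling_set_le_C1[OF finite_inputs finite_inputs, OF finite_syn_carrier_L_ab finite_syn_carrier_L_ab])
    fix s assume "s \<in> ?F"
    thus "?a s \<in> inputs L_ab n \<and> ?b s \<in> inputs L_ab n \<and> ?f (?a s) (?b s)"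
      using f_iff ab_run_fooling_word_diag by (auto simp: inputs_def syn_carrier_def)
  next
    fix s t assume "s \<in> ?F" "t \<in> ?F" "?f (?a s) (?b t)"
    thus "s = t"
      using f_iff ab_run_fooling_word_eq_0_imp_eq by simp
  qed
  moreover have "card ?F = 2 ^ n"
    using card_lists_length_eq[of "UNIV :: bool set" n] by simp
  ultimately have "(2::real) ^ n \<le> real ?C"
    by (metis of_nat_le_iff of_nat_numeral of_nat_power)
  hence "log 2 ((2::real) ^ n) \<le> log 2 (real ?C)"
    by (intro log_mono) simp_all
  thus ?thesis
    by (simp add: N1_ideal_def N1_def)
qed

lemma N1_ideal_le_N1_monoid:
  assumes "finite (syn_carrier L)" and "order_ideal L I"
  shows "N1_ideal L I n \<le> N1_monoid L n"
proof -
  have "finite {I. order_ideal L I}"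
    by (rule finite_subset[of _ "Pow (syn_carrier L)"]) (auto simp: order_ideal_def assms(1))
  hence "finite {N1_ideal L I n | I. order_ideal L I}"
    by (simp add: setcompr_eq_image)
  thus ?thesis
    unfolding N1_monoid_def using assms(2) by (auto intro: Max_ge)
qed

theorem mainTheorem10:
  shows "(\<lambda>n. N1_monoid L_ab n) \<in> \<Omega>(\<lambda>n. real n)"
proof (rule landau_omega.bigI[of 1])
  have "real n \<le> N1_monoid L_ab n" for n
    using N1_ideal_accepted_ideal_ge[of n]
      N1_ideal_le_N1_monoid[OF finite_syn_carrier_L_ab order_ideal_accepted_ideal, of n]
    by linarith
  hence "real n \<le> \<bar>N1_monoid L_ab n\<bar>" for n
    using abs_ge_self order_trans by blast
  thus "\<forall>\<^sub>F n in at_top. norm (N1_monoid L_ab n) \<ge> 1 * norm (real n)"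
    by (intro always_eventually allI) simp
qed simp

end
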